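(* Let $a_0,a_1,a_2,a_3\in\mathbb{R}$ and for real $\lambda$ let $$\mathbf{M}_\lambda=\begin{bmatrix}1&\frac{a_3}{2}&\frac{a_2-\lambda}{2}\\[2pt] \frac{a_3}{2}&\lambda&\frac{a_1}{2}\\[2pt] \frac{a_2-\lambda}{2}&\frac{a_1}{2}&a_0\end{bmatrix}.$$ For $\lambda_i\in\mathbb{R}$, the conic $\mathbf{M}_{\lambda_i}$ is a degenerate conic consisting of a real repeated line if and only if $\lambda_i=\frac{a_3^2}{4}$ and $\lambda_i$ is a root of multiplicity at least $2$ of the cubic equation $\det(\mathbf{M}_\lambda)=0$ in $\lambda$.
   Context: A real symmetric $3\times3$ matrix $\mathbf{M}$ defines the conic $\{[u:v:w]\in\mathbb{P}^2(\mathbb{C}) : (u,v,w)\mathbf{M}(u,v,w)^T=0\}$. The conic "consists of a real repeated line" if the quadratic form $(u,v,w)\mathbf{M}(u,v,w)^T$ equals $c\,\ell^2$ for some nonzero real constant $c$ and some nonzero linear form $\ell$ with real coefficients. Explicitly, $\det(\mathbf{M}_\lambda)=-\tfrac14\lambda^3+b_2\lambda^2+b_1\lambda+b_0$ with $b_0=\tfrac14(-a_1^2+a_1a_2a_3-a_0a_3^2)$, $b_1=\tfrac14(4a_0-a_2^2-a_1a_3)$, $b_2=\tfrac{a_2}{2}$. *)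

theory Defs
  imports "HOL-Analysis.Analysis" "HOL-Computational_Algebra.Polynomial"
begin

definition Mlam :: "real \<Rightarrow> real \<Rightarrow> real \<Rightarrow> real \<Rightarrow> real \<Rightarrow> real^3^3" where
  "Mlam a0 a1 a2 a3 l = vector [
      vector [1, a3/2, (a2 - l)/2],
      vector [a3/2, l, a1/2],
      vector [(a2 - l)/2, a1/2, a0]]"

definition real_repeated_line :: "real^3^3 \<Rightarrow> bool" where
  "real_repeated_line M \<longleftrightarrow>
     (\<exists>c::real. \<exists>ell::real^3. c \<noteq> 0 \<and> ell \<noteq> 0 \<and>
        (\<forall>x::real^3. x \<bullet> (M *v x) = c * (ell \<bullet> x)^2))"

definition det_poly :: "real \<Rightarrow> real \<Rightarrow> real \<Rightarrow> real \<Rightarrow> real poly" where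
  "det_poly a0 a1 a2 a3 =
     [: (- (a1^2) + a1*a2*a3 - a0*a3^2)/4, (4*a0 - a2^2 - a1*a3)/4, a2/2, -1/4 :]"

lemma poly_det_poly: "poly (det_poly a0 a1 a2 a3) l = det (Mlam a0 a1 a2 a3 l)"
  by (simp add: det_poly_def Mlam_def det_3 vector_3 power2_eq_square field_simps)

end

theory Submission
  imports Defs
begin

text \<open>Since the (1,1) entry of \<open>M\<^sub>\<lambda>\<close> is 1, polarization shows that its quadratic form is a
  nonzero multiple of a square iff it is the square of the form given by the first row, i.e. iff
  \<open>M\<^sub>\<lambda>\<close> is the outer product of its first row with itself. Comparing entries, this means
  \<open>\<lambda> = a\<^sub>3\<^sup>2/4\<close>, \<open>a\<^sub>1 = a\<^sub>3(a\<^sub>2 - \<lambda>)/2\<close> and \<open>a\<^sub>0 = ((a\<^sub>2 - \<lambda>)/2)\<^sup>2\<close>. Writing \<open>a\<^sub>3 = 2p\<close>, the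
  cubic and its derivative at \<open>\<lambda> = p\<^sup>2\<close> are \<open>-(a\<^sub>1 - p(a\<^sub>2 - p\<^sup>2))\<^sup>2/4\<close> and
  \<open>a\<^sub>0 - ((a\<^sub>2 - p\<^sup>2)/2)\<^sup>2 - p(a\<^sub>1 - p(a\<^sub>2 - p\<^sup>2))/2\<close>, so both vanish exactly under the
  last two conditions.\<close>

lemma inner_axis_mult_vec_axis:
  fixes M :: "real^'n^'n"
  shows "axis i 1 \<bullet> (M *v axis j 1) = M$i$j"
  by (simp add: matrix_vector_mult_basis inner_axis' column_def)

lemma quadratic_form_outer_product:
  fixes M :: "real^'n^'n"
  assumes "\<And>i j. M$i$j = r$i * r$j"
  shows "x \<bullet> (M *v x) = (r \<bullet> x)^2"
proof -
  have "x \<bullet> (M *v x) = (\<Sum>i\<in>UNIV. \<Sum>j\<in>UNIV. (x$i * r$i) * (r$j * x$j))"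
    by (simp add: inner_vec_def matrix_vector_mult_def assms sum_distrib_left algebra_simps)
  also have "\<dots> = (r \<bullet> x)^2"
    by (simp add: inner_vec_def power2_eq_square sum_product mult.commute)
  finally show ?thesis .
qed

lemma symmetric_entry_of_scaled_square_form:
  fixes M :: "real^'n^'n"
  assumes "transpose M = M" and "\<And>x. x \<bullet> (M *v x) = c * (l \<bullet> x)^2"
  shows "M$i$j = c * l$i * l$j"
proof -
  have "M$j$i = transpose M $ i $ j"
    by (simp add: transpose_def)
  then have sym: "M$j$i = M$i$j"
    using assms(1) by simp
  have "M$i$i + M$i$j + M$j$i + M$j$j = (axis i 1 + axis j 1) \<bullet> (M *v (axis i 1 + axis j 1))"
    by (simp add: matrix_vector_right_distrib inner_add_left inner_add_right inner_axis_mult_vec_axis)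
  also have "\<dots> = c * (l$i + l$j)^2"
    by (simp add: assms(2) inner_add_right inner_axis)
  finally have "M$i$i + M$i$j + M$j$i + M$j$j = c * (l$i + l$j)^2" .
  moreover have "M$i$i = c * (l$i)^2" "M$j$j = c * (l$j)^2"
    using assms(2)[of "axis i 1"] assms(2)[of "axis j 1"]
    by (simp_all add: inner_axis_mult_vec_axis inner_axis)
  ultimately show ?thesis
    using sym by (simp add: power2_eq_square algebra_simps)
qed

lemma scaled_square_form_iff_outer_product:
  fixes M :: "real^'n^'n"
  assumes "transpose M = M" and "M$k$k = 1"
  shows "(\<exists>c l. c \<noteq> 0 \<and> l \<noteq> 0 \<and> (\<forall>x. x \<bullet> (M *v x) = c * (l \<bullet> x)^2)) \<longleftrightarrow>
         (\<forall>i j. M$i$j = M$k$i * M$k$j)"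
proof
  assume "\<exists>c l. c \<noteq> 0 \<and> l \<noteq> 0 \<and> (\<forall>x. x \<bullet> (M *v x) = c * (l \<bullet> x)^2)"
  then obtain c l where form: "\<And>x. x \<bullet> (M *v x) = c * (l \<bullet> x)^2"
    by blast
  have entry: "M$i$j = c * l$i * l$j" for i j
    using assms(1) form by (rule symmetric_entry_of_scaled_square_form)
  have "c * (l$k)^2 = 1"
    using entry[of k k] assms(2) by (simp add: power2_eq_square)
  then show "\<forall>i j. M$i$j = M$k$i * M$k$j"
    by (simp add: entry power2_eq_square algebra_simps)
next
  assume outer: "\<forall>i j. M$i$j = M$k$i * M$k$j"
  have outer_row: "M$i$j = row k M $ i * row k M $ j" for i j
    unfolding row_def vec_lambda_beta using outer by blast
  have "row k M \<noteq> 0"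
    using assms(2) by (metis row_def vec_lambda_beta zero_index zero_neq_one)
  moreover have "x \<bullet> (M *v x) = 1 * (row k M \<bullet> x)^2" for x
    using outer_row by (simp add: quadratic_form_outer_product)
  ultimately show "\<exists>c l. c \<noteq> 0 \<and> l \<noteq> 0 \<and> (\<forall>x. x \<bullet> (M *v x) = c * (l \<bullet> x)^2)"
    by (intro exI[of _ 1] exI[of _ "row k M"]) simp
qed

lemma transpose_Mlam: "transpose (Mlam a0 a1 a2 a3 l) = Mlam a0 a1 a2 a3 l"
  by (simp add: Mlam_def transpose_def vec_eq_iff forall_3)

lemma real_repeated_line_Mlam_iff:
  "real_repeated_line (Mlam a0 a1 a2 a3 l) \<longleftrightarrow>
     l = a3^2/4 \<and> a1 = a3 * (a2 - l)/2 \<and> a0 = ((a2 - l)/2)^2"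
proof -
  let ?M = "Mlam a0 a1 a2 a3 l"
  have "?M$1$1 = 1"
    by (simp add: Mlam_def)
  then have "real_repeated_line ?M \<longleftrightarrow> (\<forall>i j. ?M$i$j = ?M$1$i * ?M$1$j)"
    unfolding real_repeated_line_def by (rule scaled_square_form_iff_outer_product[OF transpose_Mlam])
  also have "\<dots> \<longleftrightarrow> l = a3/2 * (a3/2) \<and> a1/2 = a3/2 * ((a2 - l)/2) \<and> a0 = (a2 - l)/2 * ((a2 - l)/2)"
    unfolding Mlam_def forall_3 vector_3 by auto
  finally show ?thesis
    by (simp add: power2_eq_square mult.commute)
qed

lemma order_ge_2_iff:
  fixes p :: "'a::{idom,semiring_char_0} poly"
  assumes "p \<noteq> 0"
  shows "order a p \<ge> 2 \<longleftrightarrow> poly p a = 0 \<and> poly (pderiv p) a = 0"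
proof (cases "poly p a = 0")
  case True
  then have "pderiv p \<noteq> 0"
    using assms by (auto dest: pderiv_iszero)
  moreover have "order a p = Suc (order a (pderiv p))"
    using assms True by (rule order_pderiv)
  ultimately show ?thesis
    using True by (simp add: Suc_le_eq order_gt_0_iff)
next
  case False
  then show ?thesis
    by (simp add: order_0I)
qed

lemma poly_det_poly_at_square:
  "poly (det_poly a0 a1 a2 (2*p)) (p^2) = - ((a1 - p * (a2 - p^2))^2) / 4"
  by (simp add: det_poly_def power2_eq_square power3_eq_cube field_simps)

lemma poly_pderiv_det_poly_at_square:
  "poly (pderiv (det_poly a0 a1 a2 (2*p))) (p^2) =
     (a0 - ((a2 - p^2)/2)^2) - p * (a1 - p * (a2 - p^2))/2"
  by (simp add: det_poly_def pderiv_pCons power2_eq_square field_simps)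

lemma det_poly_double_root_iff:
  "order (a3^2/4) (det_poly a0 a1 a2 a3) \<ge> 2 \<longleftrightarrow>
     a1 = a3 * (a2 - a3^2/4)/2 \<and> a0 = ((a2 - a3^2/4)/2)^2"
proof -
  define p where "p = a3/2"
  have a3: "a3 = 2*p" and l: "a3^2/4 = p^2"
    by (simp_all add: p_def power2_eq_square)
  have "det_poly a0 a1 a2 a3 \<noteq> 0"
    by (simp add: det_poly_def)
  then have "order (p^2) (det_poly a0 a1 a2 a3) \<ge> 2 \<longleftrightarrow>
      a1 - p * (a2 - p^2) = 0 \<and> (a0 - ((a2 - p^2)/2)^2) - p * (a1 - p * (a2 - p^2))/2 = 0"
    by (simp add: order_ge_2_iff a3 poly_det_poly_at_square poly_pderiv_det_poly_at_square)
  then show ?thesis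
    by (auto simp: l a3)
qed

theorem lemma3:
  fixes a0 a1 a2 a3 li :: real
  shows "real_repeated_line (Mlam a0 a1 a2 a3 li) \<longleftrightarrow>
           li = a3^2 / 4 \<and> order li (det_poly a0 a1 a2 a3) \<ge> 2"
proof (cases "li = a3^2 / 4")
  case True
  then have "real_repeated_line (Mlam a0 a1 a2 a3 li) \<longleftrightarrow>
      a1 = a3 * (a2 - a3^2/4)/2 \<and> a0 = ((a2 - a3^2/4)/2)^2"
    by (simp only: real_repeated_line_Mlam_iff simp_thms)
  also have "\<dots> \<longleftrightarrow> order li (det_poly a0 a1 a2 a3) \<ge> 2"
    unfolding True by (rule det_poly_double_root_iff[symmetric])
  finally show ?thesis
    using True by (simp only: simp_thms)
next
  case False
  then show ?thesis
    by (simp only: real_repeated_line_Mlam_iff simp_thms)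
qed

end
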